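(* For every odd integer $k\ge 3$, the graph $F_k$ is geodetic.
   Context: All graphs are finite, simple and undirected; a graph is geodetic if between any two vertices there is at most one shortest path. For odd $k\ge 3$, $F_k$ is constructed as follows: take two disjoint cycles of length $k$ with vertices $u_1,\dots,u_k$ and $v_1,\dots,v_k$ respectively (in cyclic order), and add: a vertex $b$ adjacent to $u_{(k+1)/2}$ and $v_{(k+1)/2}$; a vertex $s_1$ adjacent to $u_1$ and a vertex $s_2$ adjacent to $u_k$; a vertex $t_1$ adjacent to $v_1$ and a vertex $t_2$ adjacent to $v_k$; and four paths of length three (each with two new internal vertices) joining $s_1$ to $t_1$, $s_1$ to $t_2$, $s_2$ to $t_1$, and $s_2$ to $t_2$. *)

theory Defs
  imports Main
begin

definition is_path :: "'a set \<Rightarrow> ('a \<Rightarrow> 'a \<Rightarrow> bool) \<Rightarrow> 'a list \<Rightarrow> bool" where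
  "is_path VS E xs \<longleftrightarrow> xs \<noteq> [] \<and> set xs \<subseteq> VS \<and> distinct xs \<and>
     (\<forall>i. Suc i < length xs \<longrightarrow> E (xs ! i) (xs ! Suc i))"

definition is_shortest_path :: "'a set \<Rightarrow> ('a \<Rightarrow> 'a \<Rightarrow> bool) \<Rightarrow> 'a \<Rightarrow> 'a \<Rightarrow> 'a list \<Rightarrow> bool" where
  "is_shortest_path VS E x y xs \<longleftrightarrow> is_path VS E xs \<and> hd xs = x \<and> last xs = y \<and>
     (\<forall>ys. is_path VS E ys \<and> hd ys = x \<and> last ys = y \<longrightarrow> length xs \<le> length ys)"

definition geodetic :: "'a set \<Rightarrow> ('a \<Rightarrow> 'a \<Rightarrow> bool) \<Rightarrow> bool" where
  "geodetic VS E \<longleftrightarrow> (\<forall>x\<in>VS. \<forall>y\<in>VS. \<forall>p q.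
     is_shortest_path VS E x y p \<and> is_shortest_path VS E x y q \<longrightarrow> p = q)"

text \<open>Vertices: U i, V i (1 \<le> i \<le> k) on the two k-cycles; B; S1, S2, T1, T2;
and P j 1, P j 2 the two internal vertices of the j-th path of length three,
j = 1: S1--T1, j = 2: S1--T2, j = 3: S2--T1, j = 4: S2--T2.\<close>

datatype fvert = U nat | V nat | B | S1 | S2 | T1 | T2 | P nat nat

definition path_ends :: "(nat \<times> fvert \<times> fvert) set" where
  "path_ends = {(1, S1, T1), (2, S1, T2), (3, S2, T1), (4, S2, T2)}"

definition Fk_verts :: "nat \<Rightarrow> fvert set" where
  "Fk_verts k = {U i | i. 1 \<le> i \<and> i \<le> k} \<union> {V i | i. 1 \<le> i \<and> i \<le> k} \<union>
     {B, S1, S2, T1, T2} \<union> {P j r | j r. j \<in> {1,2,3,4} \<and> r \<in> {1,2}}"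

definition Fk_edges :: "nat \<Rightarrow> (fvert \<times> fvert) set" where
  "Fk_edges k =
     {(U i, U (Suc i)) | i. 1 \<le> i \<and> i < k} \<union> {(U k, U 1)} \<union>
     {(V i, V (Suc i)) | i. 1 \<le> i \<and> i < k} \<union> {(V k, V 1)} \<union>
     {(B, U ((k + 1) div 2)), (B, V ((k + 1) div 2))} \<union>
     {(S1, U 1), (S2, U k), (T1, V 1), (T2, V k)} \<union>
     {(s, P j 1) | j s t. (j, s, t) \<in> path_ends} \<union>
     {(P j 1, P j 2) | j s t. (j, s, t) \<in> path_ends} \<union>
     {(P j 2, t) | j s t. (j, s, t) \<in> path_ends}"

definition Fk_adj :: "nat \<Rightarrow> fvert \<Rightarrow> fvert \<Rightarrow> bool" where
  "Fk_adj k x y \<longleftrightarrow> (x, y) \<in> Fk_edges k \<or> (y, x) \<in> Fk_edges k"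

end

theory Submission
  imports Defs
begin

(* If a labelling d with d x = 0 changes by
   at most one along every edge and every other vertex y has exactly one neighbour labelled
   d y - 1, then d is the distance from x, the vertices of a shortest path from x are labelled
   0, 1, 2, ..., and walking such a path backwards from its end leaves no choice.
   For F_k with k = 2n + 1 these labellings are written down explicitly for the sources u_a
   (a <= n + 1), b, s_1 and the two path vertices next to s_1, and verified vertex by vertex by
   linear arithmetic. Reflecting both cycles (i to k + 1 - i) and exchanging the two cycles are
   automorphisms of F_k, and every vertex is the image of one of these sources under them. *)

definition geodetic_from :: "'a set \<Rightarrow> ('a \<Rightarrow> 'a \<Rightarrow> bool) \<Rightarrow> 'a \<Rightarrow> bool" where
  "geodetic_from VS E x \<longleftrightarrow> (\<forall>y\<in>VS. \<forall>p q.
     is_shortest_path VS E x y p \<and> is_shortest_path VS E x y q \<longrightarrow> p = q)"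

lemma geodetic_iff_geodetic_from: "geodetic VS E \<longleftrightarrow> (\<forall>x\<in>VS. geodetic_from VS E x)"
  unfolding geodetic_def geodetic_from_def by blast

lemma is_path_nth_mem: "is_path VS E p \<Longrightarrow> i < length p \<Longrightarrow> p ! i \<in> VS"
  unfolding is_path_def by (meson nth_mem subsetD)

lemma is_path_nth_adj: "is_path VS E p \<Longrightarrow> Suc i < length p \<Longrightarrow> E (p ! i) (p ! Suc i)"
  unfolding is_path_def by blast

lemma label_along_path_le:
  assumes lip: "\<forall>y\<in>VS. \<forall>z. E y z \<longrightarrow> d z \<le> d y + 1"
    and p: "is_path VS E p" and "i \<le> j" "j < length p"
  shows "d (p ! j) \<le> d (p ! i) + int (j - i)"
  using assms(3,4)
proof (induction j rule: dec_induct)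
  case base
  then show ?case by simp
next
  case (step j)
  have "d (p ! Suc j) \<le> d (p ! j) + 1"
    using lip is_path_nth_mem[OF p] is_path_nth_adj[OF p] step.prems by simp
  then show ?case using step by simp
qed

definition unique_parent_labelling ::
    "'a set \<Rightarrow> ('a \<Rightarrow> 'a \<Rightarrow> bool) \<Rightarrow> 'a \<Rightarrow> ('a \<Rightarrow> int) \<Rightarrow> bool" where
  "unique_parent_labelling VS E x d \<longleftrightarrow> d x = 0 \<and>
     (\<forall>y\<in>VS. 0 \<le> d y \<and> (\<forall>z. E y z \<longrightarrow> d z \<le> d y + 1) \<and>
        (y \<noteq> x \<longrightarrow> (\<exists>!z. E y z \<and> d z + 1 = d y)))"

(* Stated without a unique-existence quantifier so that it unfolds on explicit neighbour lists. *)
definition local_parent_condition :: "('a \<Rightarrow> int) \<Rightarrow> 'a \<Rightarrow> 'a \<Rightarrow> 'a list \<Rightarrow> bool" where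
  "local_parent_condition d x y L \<longleftrightarrow> 0 \<le> d y \<and> (\<forall>z\<in>set L. d z \<le> d y + 1) \<and>
     (y \<noteq> x \<longrightarrow> (\<exists>z\<in>set L. d z + 1 = d y) \<and>
        (\<forall>z\<in>set L. \<forall>w\<in>set L. d z + 1 = d y \<longrightarrow> d w + 1 = d y \<longrightarrow> z = w))"

lemma unique_parent_labelling_from_lists:
  assumes "\<And>y z. y \<in> VS \<Longrightarrow> E y z \<longleftrightarrow> z \<in> set (N y)" and "d x = 0"
    and "\<And>y. y \<in> VS \<Longrightarrow> local_parent_condition d x y (N y)"
  shows "unique_parent_labelling VS E x d"
  using assms unfolding unique_parent_labelling_def local_parent_condition_def by metis

locale sym_graph =
  fixes VS :: "'a set" and E :: "'a \<Rightarrow> 'a \<Rightarrow> bool"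
  assumes E_sym: "E a b \<Longrightarrow> E b a" and E_closed: "E a b \<Longrightarrow> b \<in> VS"
begin

context
  fixes x :: 'a and d :: "'a \<Rightarrow> int"
  assumes labelling: "unique_parent_labelling VS E x d" and root: "x \<in> VS"
begin

lemma label_root: "d x = 0"
  and label_nonneg: "y \<in> VS \<Longrightarrow> 0 \<le> d y"
  and label_lipschitz: "\<forall>y\<in>VS. \<forall>z. E y z \<longrightarrow> d z \<le> d y + 1"
  and label_parent: "y \<in> VS \<Longrightarrow> y \<noteq> x \<Longrightarrow> \<exists>!z. E y z \<and> d z + 1 = d y"
  using labelling unfolding unique_parent_labelling_def by auto

lemma label_path_start: "is_path VS E p \<Longrightarrow> hd p = x \<Longrightarrow> i < length p \<Longrightarrow> d (p ! i) \<le> int i"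
  using label_along_path_le[OF label_lipschitz, of p 0 i] label_root
  by (simp add: hd_conv_nth is_path_def)

lemma path_of_label_length:
  "y \<in> VS \<Longrightarrow> \<exists>p. is_path VS E p \<and> hd p = x \<and> last p = y \<and> length p = nat (d y) + 1"
proof (induction "nat (d y)" arbitrary: y)
  case 0
  have "y = x"
  proof (rule ccontr)
    assume "y \<noteq> x"
    with "0.prems" obtain z where "E y z" "d z + 1 = d y" using label_parent by blast
    with "0" label_nonneg E_closed show False by force
  qed
  with root label_root show ?case unfolding is_path_def by (intro exI[of _ "[x]"]) auto
next
  case (Suc m)
  with label_root have "y \<noteq> x" by auto
  with Suc.prems obtain z where z: "E y z" "d z + 1 = d y" using label_parent by blast
  have "z \<in> VS" "m = nat (d z)" using E_closed z Suc.hyps(2) by auto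
  then obtain p where p: "is_path VS E p" "hd p = x" "last p = z" "length p = m + 1"
    using Suc.hyps(1) by blast
  have "y \<notin> set p"
  proof
    assume "y \<in> set p"
    then obtain i where "i < length p" "p ! i = y" by (auto simp: in_set_conv_nth)
    then show False using label_path_start[OF p(1,2)] p(4) Suc.hyps(2) by fastforce
  qed
  moreover have "p \<noteq> []" using p(4) by auto
  ultimately have "is_path VS E (p @ [y])"
    using p E_sym[OF z(1)] Suc.prems unfolding is_path_def
    by (auto simp: nth_append last_conv_nth less_Suc_eq)
  then show ?case using p \<open>p \<noteq> []\<close> Suc.hyps(2) by (intro exI[of _ "p @ [y]"]) auto
qed

lemma shortest_path_labels:
  assumes sp: "is_shortest_path VS E x y p"
  shows "length p = nat (d y) + 1" and "\<And>i. i < length p \<Longrightarrow> d (p ! i) = int i"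
proof -
  have p: "is_path VS E p" "hd p = x" "last p = y" and "p \<noteq> []"
    using sp unfolding is_shortest_path_def is_path_def by auto
  then have y: "y \<in> VS" and pL: "p ! (length p - 1) = y"
    unfolding is_path_def by (auto simp: last_conv_nth)
  obtain r where "is_path VS E r" "hd r = x" "last r = y" "length r = nat (d y) + 1"
    using path_of_label_length[OF y] by blast
  then have "length p \<le> nat (d y) + 1" using sp unfolding is_shortest_path_def by auto
  moreover have "d y \<le> int (length p - 1)"
    using label_path_start[OF p(1,2), of "length p - 1"] pL \<open>p \<noteq> []\<close> by simp
  moreover have "0 < length p" using \<open>p \<noteq> []\<close> by simp
  ultimately show len: "length p = nat (d y) + 1" by linarith
  fix i assume i: "i < length p"
  have "d y \<le> d (p ! i) + int (length p - 1 - i)"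
    using label_along_path_le[OF label_lipschitz p(1), of i "length p - 1"] pL i by simp
  then show "d (p ! i) = int i"
    using label_path_start[OF p(1,2) i] len i label_nonneg[OF y] by linarith
qed

lemma geodetic_from_unique_parent_labelling: "geodetic_from VS E x"
  unfolding geodetic_from_def
proof (intro ballI allI impI, elim conjE)
  fix y p q assume sp: "is_shortest_path VS E x y p" "is_shortest_path VS E x y q"
  let ?L = "nat (d y)"
  have p: "is_path VS E p" "last p = y" and q: "is_path VS E q" "last q = y"
    using sp unfolding is_shortest_path_def by auto
  have len: "length p = ?L + 1" "length q = ?L + 1"
    using shortest_path_labels(1) sp by auto
  note lab = shortest_path_labels(2)[OF sp(1)] shortest_path_labels(2)[OF sp(2)]
  have "p ! i = q ! i" if "i \<le> ?L" for i
    using that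
  proof (induction i rule: inc_induct)
    case base
    show ?case using p(2) q(2) len by (simp add: last_conv_nth flip: length_greater_0_conv)
  next
    case (step i)
    let ?w = "p ! Suc i"
    have lt: "Suc i < length p" "Suc i < length q" using step.hyps len by auto
    have "E ?w (p ! i)" "E ?w (q ! i)"
      using E_sym is_path_nth_adj[OF p(1) lt(1)] is_path_nth_adj[OF q(1) lt(2)] step.IH by auto
    moreover have "d (p ! i) + 1 = d ?w" "d (q ! i) + 1 = d ?w"
      using lab lt step.IH by auto
    moreover have "?w \<in> VS" "?w \<noteq> x"
      using is_path_nth_mem[OF p(1) lt(1)] lab(1)[OF lt(1)] label_root by auto
    ultimately show ?case using label_parent by blast
  qed
  then show "p = q" using len by (intro nth_equalityI) auto
qed

end

end

definition inverse_automorphisms ::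
    "'a set \<Rightarrow> ('a \<Rightarrow> 'a \<Rightarrow> bool) \<Rightarrow> ('a \<Rightarrow> 'a) \<Rightarrow> ('a \<Rightarrow> 'a) \<Rightarrow> bool" where
  "inverse_automorphisms VS E f g \<longleftrightarrow>
     (\<forall>a\<in>VS. f a \<in> VS \<and> g a \<in> VS \<and> g (f a) = a \<and> f (g a) = a) \<and>
     (\<forall>a b. E a b \<longrightarrow> E (f a) (f b) \<and> E (g a) (g b))"

lemma inverse_automorphisms_sym:
  "inverse_automorphisms VS E f g \<Longrightarrow> inverse_automorphisms VS E g f"
  unfolding inverse_automorphisms_def by blast

lemma is_path_map:
  assumes "inverse_automorphisms VS E f g" and "is_path VS E p"
  shows "is_path VS E (map f p)"
proof -
  have "inj_on f VS" using assms(1) unfolding inverse_automorphisms_def by (metis inj_onI)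
  then show ?thesis
    using assms unfolding inverse_automorphisms_def is_path_def
    by (auto simp: distinct_map inj_on_subset)
qed

lemma is_shortest_path_map:
  assumes fg: "inverse_automorphisms VS E f g" and sp: "is_shortest_path VS E x y p"
  shows "is_shortest_path VS E (f x) (f y) (map f p)"
proof -
  have p: "is_path VS E p" "hd p = x" "last p = y" "p \<noteq> []"
    using sp unfolding is_shortest_path_def is_path_def by auto
  then have "x \<in> VS" "y \<in> VS" unfolding is_path_def by auto
  then have gfxy: "g (f x) = x" "g (f y) = y" using fg unfolding inverse_automorphisms_def by auto
  have "length p \<le> length (map f ys)"
    if ys: "is_path VS E ys" "hd ys = f x" "last ys = f y" for ys
  proof -
    have "ys \<noteq> []" using ys(1) unfolding is_path_def by auto
    then have "hd (map g ys) = x" "last (map g ys) = y"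
      using ys gfxy by (auto simp: hd_map last_map)
    moreover have "is_path VS E (map g ys)"
      using is_path_map[OF inverse_automorphisms_sym[OF fg] ys(1)] .
    ultimately show ?thesis using sp unfolding is_shortest_path_def by fastforce
  qed
  then show ?thesis
    using is_path_map[OF fg p(1)] p unfolding is_shortest_path_def by (auto simp: hd_map last_map)
qed

lemma geodetic_from_automorphism:
  assumes fg: "inverse_automorphisms VS E f g" and x: "x \<in> VS" and geo: "geodetic_from VS E x"
  shows "geodetic_from VS E (f x)"
  unfolding geodetic_from_def
proof (intro ballI allI impI, elim conjE)
  fix y p q
  assume y: "y \<in> VS" and sp: "is_shortest_path VS E (f x) y p" "is_shortest_path VS E (f x) y q"
  have "g (f x) = x" "g y \<in> VS" "\<forall>a\<in>VS. f (g a) = a"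
    using fg x y unfolding inverse_automorphisms_def by auto
  moreover have "map g p = map g q"
    using geo is_shortest_path_map[OF inverse_automorphisms_sym[OF fg] sp(1)]
      is_shortest_path_map[OF inverse_automorphisms_sym[OF fg] sp(2)] calculation(1,2)
    unfolding geodetic_from_def by auto
  moreover have "set p \<subseteq> VS" "set q \<subseteq> VS"
    using sp unfolding is_shortest_path_def is_path_def by auto
  ultimately show "p = q" by (metis map_idI map_map comp_def subsetD)
qed

lemma Fk_sym_graph: "1 \<le> k \<Longrightarrow> sym_graph (Fk_verts k) (Fk_adj k)"
  unfolding sym_graph_def Fk_adj_def Fk_edges_def path_ends_def Fk_verts_def by auto

lemma Fk_verts_cases [consumes 1, case_names U V B S1 S2 T1 T2 P]:
  assumes "y \<in> Fk_verts k"
  obtains j where "y = U j" "1 \<le> j" "j \<le> k" | j where "y = V j" "1 \<le> j" "j \<le> k"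
    | "y = B" | "y = S1" | "y = S2" | "y = T1" | "y = T2"
    | j r where "y = P j r" "j \<in> {1,2,3,4}" "r \<in> {1,2}"
  using assms unfolding Fk_verts_def by blast

lemma U_in_Fk_verts: "U j \<in> Fk_verts k \<longleftrightarrow> 1 \<le> j \<and> j \<le> k"
  unfolding Fk_verts_def by auto

lemma Fk_verts_positions [consumes 2, case_names U1 Umid Ulast U V1 Vmid Vlast V
    B S1 S2 T1 T2 P11 P12 P21 P22 P31 P32 P41 P42]:
  assumes "y \<in> Fk_verts (2*n+1)" and "1 \<le> n"
  obtains "y = U 1" | "y = U (n+1)" | "y = U (2*n+1)"
    | j where "y = U j" "1 < j" "j < 2*n+1" "j \<noteq> n+1"
    | "y = V 1" | "y = V (n+1)" | "y = V (2*n+1)"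
    | j where "y = V j" "1 < j" "j < 2*n+1" "j \<noteq> n+1"
    | "y = B" | "y = S1" | "y = S2" | "y = T1" | "y = T2"
    | "y = P 1 1" | "y = P 1 2" | "y = P 2 1" | "y = P 2 2"
    | "y = P 3 1" | "y = P 3 2" | "y = P 4 1" | "y = P 4 2"
  using assms unfolding Fk_verts_def by fastforce

definition Fk_neighbours :: "nat \<Rightarrow> fvert \<Rightarrow> fvert list" where
  "Fk_neighbours n y = (case y of
      U j \<Rightarrow> [U (if j = 1 then 2*n+1 else j - 1), U (if j = 2*n+1 then 1 else j + 1)]
        @ (if j = 1 then [S1] else []) @ (if j = 2*n+1 then [S2] else []) @ (if j = n+1 then [B] else [])
    | V j \<Rightarrow> [V (if j = 1 then 2*n+1 else j - 1), V (if j = 2*n+1 then 1 else j + 1)]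
        @ (if j = 1 then [T1] else []) @ (if j = 2*n+1 then [T2] else []) @ (if j = n+1 then [B] else [])
    | B \<Rightarrow> [U (n+1), V (n+1)]
    | S1 \<Rightarrow> [U 1, P 1 1, P 2 1]
    | S2 \<Rightarrow> [U (2*n+1), P 3 1, P 4 1]
    | T1 \<Rightarrow> [V 1, P 1 2, P 3 2]
    | T2 \<Rightarrow> [V (2*n+1), P 2 2, P 4 2]
    | P j r \<Rightarrow> if r = 1 then [if j \<le> 2 then S1 else S2, P j 2] else [P j 1, if odd j then T1 else T2])"

lemma Fk_adj_iff_neighbours:
  assumes "1 \<le> n" and "y \<in> Fk_verts (2*n+1)"
  shows "Fk_adj (2*n+1) y z \<longleftrightarrow> z \<in> set (Fk_neighbours n y)"
  using assms(2,1) unfolding Fk_adj_def Fk_edges_def path_ends_def Fk_neighbours_def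
  by (cases rule: Fk_verts_cases; cases z) auto

lemma Fk_involution_automorphism:
  assumes n: "1 \<le> n"
    and verts: "\<And>a. a \<in> Fk_verts (2*n+1) \<Longrightarrow> f a \<in> Fk_verts (2*n+1) \<and> f (f a) = a"
    and nbrs: "\<And>a b. a \<in> Fk_verts (2*n+1) \<Longrightarrow> b \<in> set (Fk_neighbours n a) \<Longrightarrow>
      f b \<in> set (Fk_neighbours n (f a))"
  shows "inverse_automorphisms (Fk_verts (2*n+1)) (Fk_adj (2*n+1)) f f"
proof -
  have "Fk_adj (2*n+1) (f a) (f b)" if ab: "Fk_adj (2*n+1) a b" for a b
  proof -
    have a: "a \<in> Fk_verts (2*n+1)" using Fk_sym_graph[of "2*n+1"] ab unfolding sym_graph_def by auto
    then show ?thesis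
      using nbrs ab verts[OF a] Fk_adj_iff_neighbours[OF n] by blast
  qed
  with verts show ?thesis unfolding inverse_automorphisms_def by blast
qed

definition Fk_reflect :: "nat \<Rightarrow> fvert \<Rightarrow> fvert" where
  "Fk_reflect n y = (case y of U i \<Rightarrow> U (2*n+2-i) | V i \<Rightarrow> V (2*n+2-i) | B \<Rightarrow> B
     | S1 \<Rightarrow> S2 | S2 \<Rightarrow> S1 | T1 \<Rightarrow> T2 | T2 \<Rightarrow> T1 | P j r \<Rightarrow> P (5 - j) r)"

(* Internal path vertices are counted from the s-end, so exchanging the cycles reverses every path. *)
definition Fk_swap :: "fvert \<Rightarrow> fvert" where
  "Fk_swap y = (case y of U i \<Rightarrow> V i | V i \<Rightarrow> U i | B \<Rightarrow> B
     | S1 \<Rightarrow> T1 | T1 \<Rightarrow> S1 | S2 \<Rightarrow> T2 | T2 \<Rightarrow> S2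
     | P j r \<Rightarrow> P (if j = 2 then 3 else if j = 3 then 2 else j) (3 - r))"

lemma Fk_reflect_automorphism:
  assumes n: "1 \<le> n"
  shows "inverse_automorphisms (Fk_verts (2*n+1)) (Fk_adj (2*n+1)) (Fk_reflect n) (Fk_reflect n)"
proof (rule Fk_involution_automorphism[OF n])
  fix a b assume "a \<in> Fk_verts (2*n+1)" "b \<in> set (Fk_neighbours n a)"
  from this(1) n show "Fk_reflect n b \<in> set (Fk_neighbours n (Fk_reflect n a))"
    using \<open>b \<in> set (Fk_neighbours n a)\<close>
    by (cases rule: Fk_verts_positions) (auto simp: Fk_neighbours_def Fk_reflect_def)
qed (auto simp: Fk_verts_def Fk_reflect_def)

lemma Fk_swap_automorphism:
  assumes n: "1 \<le> n"
  shows "inverse_automorphisms (Fk_verts (2*n+1)) (Fk_adj (2*n+1)) Fk_swap Fk_swap"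
proof (rule Fk_involution_automorphism[OF n])
  fix a b assume "a \<in> Fk_verts (2*n+1)" "b \<in> set (Fk_neighbours n a)"
  then show "Fk_swap b \<in> set (Fk_neighbours n (Fk_swap a))"
    by (cases rule: Fk_verts_cases) (auto simp: Fk_neighbours_def Fk_swap_def)
qed (auto simp: Fk_verts_def Fk_swap_def)

lemma Fk_labellingI:
  assumes n: "1 \<le> n" and "d x = 0"
    and "\<And>y. y \<in> Fk_verts (2*n+1) \<Longrightarrow> local_parent_condition d x y (Fk_neighbours n y)"
  shows "unique_parent_labelling (Fk_verts (2*n+1)) (Fk_adj (2*n+1)) x d"
  using Fk_adj_iff_neighbours[OF n] assms(2,3) by (rule unique_parent_labelling_from_lists)

definition cycle_dist :: "nat \<Rightarrow> nat \<Rightarrow> nat \<Rightarrow> int" where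
  "cycle_dist k i j = min \<bar>int i - int j\<bar> (int k - \<bar>int i - int j\<bar>)"

definition cycle_end_dist :: "nat \<Rightarrow> nat \<Rightarrow> int" where
  "cycle_end_dist k j = min (int j - 1) (int k - int j)"

(* For a <= n + 1. The two routes to V j are through s_1 and a t-vertex, and through b. *)
definition dist_U :: "nat \<Rightarrow> nat \<Rightarrow> fvert \<Rightarrow> int" where
  "dist_U n a y = (case y of
       U j \<Rightarrow> cycle_dist (2*n+1) a j
     | V j \<Rightarrow> min (int a + 4 + cycle_end_dist (2*n+1) j) (int n + 3 - int a + \<bar>int j - int n - 1\<bar>)
     | B \<Rightarrow> int n + 2 - int a
     | S1 \<Rightarrow> int a
     | S2 \<Rightarrow> min (int a + 1) (2 * int n + 2 - int a)
     | P j r \<Rightarrow> if j \<le> 2 then int a + int r else min (int a + 1 + int r) (2 * int n + 2 - int a + int r)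
     | _ \<Rightarrow> min (int a + 3) (2 * int n + 4 - int a))"

definition dist_B :: "nat \<Rightarrow> fvert \<Rightarrow> int" where
  "dist_B n y = (case y of
       U j \<Rightarrow> 1 + \<bar>int j - int n - 1\<bar> | V j \<Rightarrow> 1 + \<bar>int j - int n - 1\<bar> | B \<Rightarrow> 0
     | P _ _ \<Rightarrow> int n + 3 | _ \<Rightarrow> int n + 2)"

definition dist_S1 :: "nat \<Rightarrow> fvert \<Rightarrow> int" where
  "dist_S1 n y = (case y of
       U j \<Rightarrow> 1 + cycle_dist (2*n+1) 1 j
     | V j \<Rightarrow> min (4 + cycle_end_dist (2*n+1) j) (int n + 3 + \<bar>int j - int n - 1\<bar>)
     | B \<Rightarrow> int n + 2 | S1 \<Rightarrow> 0 | S2 \<Rightarrow> 3 | T1 \<Rightarrow> 3 | T2 \<Rightarrow> 3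
     | P j r \<Rightarrow> if j \<le> 2 then int r else 4)"

definition dist_P11 :: "nat \<Rightarrow> fvert \<Rightarrow> int" where
  "dist_P11 n y = (case y of
       U j \<Rightarrow> 2 + cycle_dist (2*n+1) 1 j
     | V j \<Rightarrow> min (3 + cycle_dist (2*n+1) 1 j) (int n + 4 + \<bar>int j - int n - 1\<bar>)
     | B \<Rightarrow> int n + 3 | S1 \<Rightarrow> 1 | S2 \<Rightarrow> 4 | T1 \<Rightarrow> 2 | T2 \<Rightarrow> 4
     | P j r \<Rightarrow> if j = 1 then int r - 1 else if j = 2 then int r + 1
                 else if j = 3 then 5 - int r else 5)"

definition dist_P21 :: "nat \<Rightarrow> fvert \<Rightarrow> int" where
  "dist_P21 n y = (case y of
       U j \<Rightarrow> 2 + cycle_dist (2*n+1) 1 j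
     | V j \<Rightarrow> min (3 + cycle_dist (2*n+1) (2*n+1) j) (int n + 4 + \<bar>int j - int n - 1\<bar>)
     | B \<Rightarrow> int n + 3 | S1 \<Rightarrow> 1 | S2 \<Rightarrow> 4 | T1 \<Rightarrow> 4 | T2 \<Rightarrow> 2
     | P j r \<Rightarrow> if j = 2 then int r - 1 else if j = 1 then int r + 1
                 else if j = 4 then 5 - int r else 5)"

lemmas Fk_dist_defs = dist_U_def dist_B_def dist_S1_def dist_P11_def dist_P21_def
  cycle_dist_def cycle_end_dist_def

lemma dist_U_labelling:
  assumes n: "1 \<le> n" and a: "1 \<le> a" "a \<le> n+1"
  shows "unique_parent_labelling (Fk_verts (2*n+1)) (Fk_adj (2*n+1)) (U a) (dist_U n a)"
proof (rule Fk_labellingI[OF n])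
  fix y assume "y \<in> Fk_verts (2*n+1)"
  from this n show "local_parent_condition (dist_U n a) (U a) y (Fk_neighbours n y)"
    using a by (cases rule: Fk_verts_positions; simp add: local_parent_condition_def Fk_neighbours_def;
      safe?; (simp add: Fk_dist_defs min_def abs_if split: if_splits)?; arith)
qed (simp add: Fk_dist_defs)

lemma dist_B_labelling:
  assumes n: "1 \<le> n"
  shows "unique_parent_labelling (Fk_verts (2*n+1)) (Fk_adj (2*n+1)) B (dist_B n)"
proof (rule Fk_labellingI[OF n])
  fix y assume "y \<in> Fk_verts (2*n+1)"
  from this n show "local_parent_condition (dist_B n) B y (Fk_neighbours n y)"
    by (cases rule: Fk_verts_positions; simp add: local_parent_condition_def Fk_neighbours_def;
      safe?; (simp add: Fk_dist_defs min_def abs_if split: if_splits)?; arith)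
qed (simp add: Fk_dist_defs)

lemma dist_S1_labelling:
  assumes n: "1 \<le> n"
  shows "unique_parent_labelling (Fk_verts (2*n+1)) (Fk_adj (2*n+1)) S1 (dist_S1 n)"
proof (rule Fk_labellingI[OF n])
  fix y assume "y \<in> Fk_verts (2*n+1)"
  from this n show "local_parent_condition (dist_S1 n) S1 y (Fk_neighbours n y)"
    by (cases rule: Fk_verts_positions; simp add: local_parent_condition_def Fk_neighbours_def;
      safe?; (simp add: Fk_dist_defs min_def abs_if split: if_splits)?; arith)
qed (simp add: Fk_dist_defs)

lemma dist_P11_labelling:
  assumes n: "1 \<le> n"
  shows "unique_parent_labelling (Fk_verts (2*n+1)) (Fk_adj (2*n+1)) (P 1 1) (dist_P11 n)"
proof (rule Fk_labellingI[OF n])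
  fix y assume "y \<in> Fk_verts (2*n+1)"
  from this n show "local_parent_condition (dist_P11 n) (P 1 1) y (Fk_neighbours n y)"
    by (cases rule: Fk_verts_positions; simp add: local_parent_condition_def Fk_neighbours_def;
      safe?; (simp add: Fk_dist_defs min_def abs_if split: if_splits)?; arith)
qed (simp add: Fk_dist_defs)

lemma dist_P21_labelling:
  assumes n: "1 \<le> n"
  shows "unique_parent_labelling (Fk_verts (2*n+1)) (Fk_adj (2*n+1)) (P 2 1) (dist_P21 n)"
proof (rule Fk_labellingI[OF n])
  fix y assume "y \<in> Fk_verts (2*n+1)"
  from this n show "local_parent_condition (dist_P21 n) (P 2 1) y (Fk_neighbours n y)"
    by (cases rule: Fk_verts_positions; simp add: local_parent_condition_def Fk_neighbours_def;
      safe?; (simp add: Fk_dist_defs min_def abs_if split: if_splits)?; arith)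
qed (simp add: Fk_dist_defs)

context
  fixes n :: nat
  assumes n: "1 \<le> n"
begin

lemma Fk_geodetic_from_labelled:
  "unique_parent_labelling (Fk_verts (2*n+1)) (Fk_adj (2*n+1)) x d \<Longrightarrow>
    x \<in> Fk_verts (2*n+1) \<Longrightarrow> geodetic_from (Fk_verts (2*n+1)) (Fk_adj (2*n+1)) x"
  using Fk_sym_graph[of "2*n+1"] sym_graph.geodetic_from_unique_parent_labelling by simp

lemma Fk_geodetic_from_U:
  assumes j: "1 \<le> j" "j \<le> 2*n+1"
  shows "geodetic_from (Fk_verts (2*n+1)) (Fk_adj (2*n+1)) (U j)"
proof (cases "j \<le> n+1")
  case True
  then show ?thesis
    using Fk_geodetic_from_labelled[OF dist_U_labelling[OF n j(1) True]] j by (simp add: U_in_Fk_verts)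
next
  case False
  then have j': "1 \<le> 2*n+2-j" "2*n+2-j \<le> n+1" using j by auto
  then have mirror: "U (2*n+2-j) \<in> Fk_verts (2*n+1)" by (simp add: U_in_Fk_verts)
  then have "geodetic_from (Fk_verts (2*n+1)) (Fk_adj (2*n+1)) (U (2*n+2-j))"
    using Fk_geodetic_from_labelled[OF dist_U_labelling[OF n j']] by simp
  from geodetic_from_automorphism[OF Fk_reflect_automorphism[OF n] mirror this]
  show ?thesis using j by (simp add: Fk_reflect_def)
qed

lemma Fk_geodetic_from:
  assumes x: "x \<in> Fk_verts (2*n+1)"
  shows "geodetic_from (Fk_verts (2*n+1)) (Fk_adj (2*n+1)) x"
proof -
  let ?G = "geodetic_from (Fk_verts (2*n+1)) (Fk_adj (2*n+1))"
  note reflect = geodetic_from_automorphism[OF Fk_reflect_automorphism[OF n]]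
  note swap = geodetic_from_automorphism[OF Fk_swap_automorphism[OF n]]
  have mem: "B \<in> Fk_verts (2*n+1)" "S1 \<in> Fk_verts (2*n+1)" "S2 \<in> Fk_verts (2*n+1)"
    "P 1 1 \<in> Fk_verts (2*n+1)" "P 2 1 \<in> Fk_verts (2*n+1)" "P 3 1 \<in> Fk_verts (2*n+1)"
    "P 4 1 \<in> Fk_verts (2*n+1)"
    by (auto simp: Fk_verts_def)
  have B: "?G B" and S1: "?G S1" and P11: "?G (P 1 1)" and P21: "?G (P 2 1)"
    using Fk_geodetic_from_labelled[OF dist_B_labelling[OF n] mem(1)]
      Fk_geodetic_from_labelled[OF dist_S1_labelling[OF n] mem(2)]
      Fk_geodetic_from_labelled[OF dist_P11_labelling[OF n] mem(4)]
      Fk_geodetic_from_labelled[OF dist_P21_labelling[OF n] mem(5)] by simp_all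
  have S2: "?G S2" and P31: "?G (P 3 1)" and P41: "?G (P 4 1)"
    using reflect[OF mem(2) S1] reflect[OF mem(5) P21] reflect[OF mem(4) P11]
    by (simp_all add: Fk_reflect_def)
  have "?G T1" "?G T2" "?G (P 1 2)" "?G (P 2 2)" "?G (P 3 2)" "?G (P 4 2)"
    using swap[OF mem(2) S1] swap[OF mem(3) S2] swap[OF mem(4) P11] swap[OF mem(6) P31]
      swap[OF mem(5) P21] swap[OF mem(7) P41]
    by (simp_all add: Fk_swap_def)
  with x show ?thesis
  proof (cases rule: Fk_verts_cases)
    case (V j)
    then show ?thesis using swap[OF _ Fk_geodetic_from_U] by (simp add: Fk_swap_def U_in_Fk_verts)
  qed (use Fk_geodetic_from_U B S1 S2 P11 P21 P31 P41 in auto)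
qed

end

theorem proposition4:
  fixes k :: nat
  assumes "odd k" and "k \<ge> 3"
  shows "geodetic (Fk_verts k) (Fk_adj k)"
proof -
  obtain n where k: "k = 2*n+1" using assms(1) oddE by blast
  with assms(2) have "1 \<le> n" by simp
  then show ?thesis unfolding k geodetic_iff_geodetic_from using Fk_geodetic_from by blast
qed

end
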